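(* Assume that all random variables $Z_i(j)$ are centered, i.e. $\mathbb{E}Z_i(j)=0$. Then for $p\geq2$, $l\in\mathbb{N}$ (with $l\geq1$) and $p\geq l$, \[ \mathbb{E}\left[Z-2M\frac{\log(2N)}{\sqrt n}\right]_+^l\leq\left(\frac{35l^2}{n}\right)^{\frac l2}M^l. \]
   Context: Let $n,N$ be positive integers and $\mathcal{Z}_1,\dots,\mathcal{Z}_n$ probability spaces; all random variables below live on the product space with the product measure. For $1\leq i\leq n$, $1\leq j\leq N$ let $Z_i(j):\mathcal{Z}_i\to\mathbb{R}$ be random variables (independent across $i$, not necessarily identically distributed), $\mathbb{P}_nZ(j):=\frac1n\sum_{i=1}^nZ_i(j)$, $Z:=\max_{1\leq j\leq N}|\mathbb{P}_nZ(j)|$. Let $\mathcal{E}_i:\mathcal{Z}_i\to\mathbb{R}$ satisfy $|Z_i(j)|\leq\mathcal{E}_i$ for all $i,j$, and assume there are $p\in[1,\infty)$ and $M>0$ with $\mathbb{E}\mathcal{E}_i^p\leq M^p$ for all $i$. Notation: $(x)_+^l:=(\max\{0,x\})^l$; $\log$ is the natural logarithm. *)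

theory Defs
  imports "HOL-Probability.Probability"
begin

definition maxZ :: "nat \<Rightarrow> nat \<Rightarrow> (nat \<Rightarrow> nat \<Rightarrow> 'a \<Rightarrow> real) \<Rightarrow> (nat \<Rightarrow> 'a) \<Rightarrow> real" where
  "maxZ n N Z \<omega> = Max ((\<lambda>j. \<bar>(1 / real n) * (\<Sum>i=1..n. Z i j (\<omega> i))\<bar>) ` {1..N})"

end

theory Submission
  imports Defs
begin

(* The maximum is replaced by the soft maximum smax N lam s = ln (2 * sum_j cosh (lam * s j)) / lam
   with lam = sqrt n / (2 * M).  It dominates max_j |s j|, equals 2 M ln (2N) / sqrt n at s = 0, is
   1-Lipschitz for the sup-norm and, by Hoeffding's lemma, satisfies the second-order bound
   smax (s + x) <= smax s + <grad smax s, x> + lam * |x|^2 / 2.  Adding the centred summands Z_i / n one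
   at a time, a Taylor expansion of d |-> (d + K)_+^q removes the linear term in expectation, and the
   moment bound on the envelope gives E [(D_k + K)_+^q + K^q] <= (1 + alpha / n) E [(D_(k-1) + K)_+^q + K^q]
   with alpha depending only on q and M / (sqrt n * K).  After n steps E (D + K)_+^q <= 2 e^alpha K^q,
   and K = 2 l M / sqrt n gives the constant 35; for l = 1 one takes q = 2, K = 6 M / sqrt n and uses
   d_+ <= ((d + K)_+^2 + K^2) / (4 K). *)

lemma exp_le_chord:
  fixes H h :: real
  assumes H: "H > 0" and h: "\<bar>h\<bar> \<le> H"
  shows "exp h \<le> cosh H + h / H * sinh H"
proof -
  define t where "t = (H + h) / (2*H)"
  have t: "t \<ge> 0" "t \<le> 1" using H h by (auto simp: t_def field_simps)
  have "exp ((1 - t) *\<^sub>R (-H) + t *\<^sub>R H) \<le> (1 - t) * exp (-H) + t * exp H"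
    using convex_onD[OF convex_on_exp[of 1], of t "-H" H] t by simp
  moreover have "(1 - t) *\<^sub>R (-H) + t *\<^sub>R H = h" using H by (simp add: t_def field_simps)
  moreover have "(1 - t) * exp (-H) + t * exp H = cosh H + h / H * sinh H"
    using H by (simp add: t_def cosh_field_def sinh_field_def field_simps)
  ultimately show ?thesis by simp
qed

lemma power_add_le_taylor2:
  fixes t u :: real and q :: nat
  assumes q: "q \<ge> 2" and t: "t \<ge> 0" and tu: "t + u \<ge> 0"
  shows "(t + u)^q \<le> t^q + q * t^(q-1) * u + (real q * (real q - 1) / 2) * (t + \<bar>u\<bar>)^(q-2) * u^2"
proof (cases "u = 0")
  case True
  then show ?thesis by simp
next
  case False
  define d :: "nat \<Rightarrow> real \<Rightarrow> real" where
    "d = (\<lambda>m x. if m = 0 then x^q else if m = 1 then real q * x^(q-1) else real q * (real q - 1) * x^(q-2))"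
  have "DERIV (d m) x :> d (Suc m) x" if "m < 2" for m x
  proof -
    have "DERIV (\<lambda>x. real q * x^(q-1)) x :> real q * (real (q-1) * x^(q-1-1))"
      by (auto intro!: derivative_eq_intros)
    moreover have "q - 1 - 1 = q - 2" "real (q - 1) = real q - 1" using q by auto
    ultimately show ?thesis using that
      by (auto simp: d_def less_2_cases_iff intro!: derivative_eq_intros)
  qed
  then obtain \<xi> where \<xi>: "if t + u < t then t + u < \<xi> \<and> \<xi> < t else t < \<xi> \<and> \<xi> < t + u"
    and taylor: "(t + u)^q = (\<Sum>m<2. d m t / fact m * (t + u - t)^m) + d 2 \<xi> / fact 2 * (t + u - t)^2"
    using Taylor[of 2 d "\<lambda>x. x^q" "min t (t+u)" "max t (t+u)" t "t+u"] False
    by (auto simp: d_def)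
  have "(t + u)^q = t^q + q * t^(q-1) * u + (real q * (real q - 1) / 2) * \<xi>^(q-2) * u^2"
    using taylor by (simp add: d_def lessThan_nat_numeral)
  moreover have "\<xi>^(q-2) \<le> (t + \<bar>u\<bar>)^(q-2)"
    using \<xi> t tu by (intro power_mono) (auto split: if_splits)
  then have "(real q * (real q - 1) / 2) * \<xi>^(q-2) * u^2 \<le> (real q * (real q - 1) / 2) * (t + \<bar>u\<bar>)^(q-2) * u^2"
    using q by (intro mult_right_mono mult_left_mono) auto
  ultimately show ?thesis by linarith
qed

lemma power_taylor2_nonneg:
  fixes t u :: real and q :: nat
  assumes q: "q \<ge> 2" and t: "t \<ge> 0"
  shows "0 \<le> t^q + q * t^(q-1) * u + (real q * (real q - 1) / 2) * t^(q-2) * u^2"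
proof -
  \<comment> \<open>\<open>t^(q-2)\<close> times a sum of squares\<close>
  have "0 \<le> t^(q-2) * ((t + (q/2)*u)^2 + (real q*(real q-2)/4) * u^2)"
    using q t by (intro mult_nonneg_nonneg add_nonneg_nonneg) auto
  also have "\<dots> = t^(q-2) * t^2 + q * (t^(q-2)*t) * u + (real q * (real q - 1) / 2) * t^(q-2) * u^2"
    using q by (simp add: power2_eq_square field_simps of_nat_diff)
  also have "t^(q-2) * t^2 = t^q" using q by (metis le_add_diff_inverse2 power_add)
  also have "t^(q-2) * t = t^(q-1)" using q by (simp flip: power_Suc2 add: Suc_diff_Suc numeral_2_eq_2)
  finally show ?thesis .
qed

lemma max_0_power_add_le:
  fixes t u :: real and q :: nat
  assumes q: "q \<ge> 2"
  shows "(max 0 (t + u))^q \<le> (max 0 t)^q + q * (max 0 t)^(q-1) * u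
           + (real q * (real q - 1) / 2) * (max 0 t + \<bar>u\<bar>)^(q-2) * u^2"
proof -
  have c2: "(real q * (real q - 1) / 2) \<ge> 1"
  proof -
    have "real q * (real q - 1) \<ge> 2 * 1" using q by (intro mult_mono) auto
    then show ?thesis using q by (simp add: of_nat_diff)
  qed
  consider "t \<ge> 0" "t + u \<ge> 0" | "t \<ge> 0" "t + u < 0" | "t < 0" "t + u \<ge> 0" | "t < 0" "t + u < 0"
    by linarith
  then show ?thesis
  proof cases
    case 1
    then show ?thesis using power_add_le_taylor2[OF q] by simp
  next
    case 2
    have "(real q * (real q - 1) / 2) * t^(q-2) * u^2 \<le> (real q * (real q - 1) / 2) * (t + \<bar>u\<bar>)^(q-2) * u^2"
      using 2 c2 by (intro mult_right_mono mult_left_mono power_mono) auto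
    moreover have "(max 0 (t + u))^q = 0" "max 0 t = t" using 2 q by auto
    ultimately show ?thesis using power_taylor2_nonneg[OF q, of t u] 2 by linarith
  next
    case 3
    have "(t + u)^q \<le> \<bar>u\<bar>^q" using 3 by (intro power_mono) auto
    also have "\<bar>u\<bar>^q = \<bar>u\<bar>^(q-2) * u^2" using q by (metis le_add_diff_inverse2 power2_abs power_add)
    also have "\<dots> \<le> (real q * (real q - 1) / 2) * \<bar>u\<bar>^(q-2) * u^2"
      using mult_right_mono[OF c2, of "\<bar>u\<bar>^(q-2) * u^2"] by (simp add: mult.assoc)
    finally show ?thesis using 3 q by (simp add: power_0_left)
  next
    case 4
    then show ?thesis using q c2 by (simp add: power_0_left)
  qed
qed

lemma one_plus_inverse_power_le_exp: "(1 + 1 / real q)^q \<le> exp 1"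
proof (cases "q = 0")
  case False
  have "(1 + 1 / real q)^q \<le> (exp (1 / real q))^q"
    by (rule power_mono) (use exp_ge_add_one_self[of "1 / real q"] in auto)
  also have "\<dots> = exp 1" using False by (simp flip: exp_of_nat_mult)
  finally show ?thesis .
qed simp

lemma power_add_mult_square_le:
  fixes v a :: real and q :: nat
  assumes q: "q \<ge> 2" and v: "v \<ge> 0" and a: "a \<ge> 0"
  shows "(v + a)^(q-2) * a^2 \<le> exp 1 * v^(q-2) * a^2 + (real q + 1)^(q-2) * a^q"
proof (cases "a * q \<le> v")
  case True
  have "v + a \<le> v * (1 + 1 / real q)" using True q by (simp add: field_simps)
  then have "(v + a)^(q-2) \<le> v^(q-2) * (1 + 1 / real q)^(q-2)"
    using v a by (simp flip: power_mult_distrib add: power_mono)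
  also have "\<dots> \<le> v^(q-2) * exp 1"
    using one_plus_inverse_power_le_exp[of q] power_increasing[of "q-2" q "1 + 1 / real q"] v
    by (intro mult_left_mono) auto
  finally have "(v + a)^(q-2) \<le> exp 1 * v^(q-2)" by (simp add: mult.commute)
  then have "(v + a)^(q-2) * a^2 \<le> exp 1 * v^(q-2) * a^2" by (rule mult_right_mono) simp
  then show ?thesis using a by (simp add: add_increasing2)
next
  case False
  have "v + a \<le> (real q + 1) * a" using False by (simp add: algebra_simps)
  then have "(v + a)^(q-2) * a^2 \<le> ((real q + 1) * a)^(q-2) * a^2"
    using v a by (intro mult_right_mono power_mono) auto
  also have "\<dots> = (real q + 1)^(q-2) * (a^(q-2) * a^2)" by (simp add: power_mult_distrib)
  also have "a^(q-2) * a^2 = a^q" using q by (metis le_add_diff_inverse2 power_add)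
  finally show ?thesis using v by (simp add: add_increasing)
qed

lemma mult_power_le_power_add_power:
  fixes v K :: real
  assumes "v \<ge> 0" "K \<ge> 0" "j \<le> q"
  shows "K^j * v^(q-j) \<le> v^q + K^q"
proof (cases "v \<le> K")
  case True
  have "K^j * v^(q-j) \<le> K^j * K^(q-j)" using assms True by (intro mult_left_mono power_mono) auto
  also have "\<dots> = K^q" using assms by (simp flip: power_add)
  finally show ?thesis using assms by (simp add: add_increasing)
next
  case False
  have "K^j * v^(q-j) \<le> v^j * v^(q-j)" using assms False by (intro mult_right_mono power_mono) auto
  also have "\<dots> = v^q" using assms by (simp flip: power_add)
  finally show ?thesis using assms by (simp add: add_increasing2)
qed

lemma power_divide_le_power_divide_sqrt:
  fixes C :: real and n q :: nat
  assumes C: "C \<ge> 0" and n: "n \<ge> 1" and q: "q \<ge> 2"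
  shows "(C / n)^q \<le> (C / sqrt n)^q / n"
proof -
  have sq: "sqrt (real n) \<ge> 1" "sqrt (real n) * sqrt (real n) = real n" using n by auto
  have "real n * sqrt (real n)^q = sqrt (real n)^(q+2)"
    using sq by (simp add: power2_eq_square power_add)
  also have "\<dots> \<le> sqrt (real n)^(2*q)" using sq q by (intro power_increasing) auto
  also have "\<dots> = real n ^ q" using sq by (simp add: power_mult power2_eq_square)
  finally have "real n * sqrt (real n)^q \<le> real n ^ q" .
  then have "C^q / real n ^ q \<le> C^q / (real n * sqrt (real n)^q)"
    using C sq by (intro divide_left_mono) auto
  then show ?thesis by (simp add: power_divide field_simps)
qed

lemma cosh_add_le_exp_abs: "cosh (y + h) \<le> exp \<bar>h\<bar> * cosh (y :: real)"
proof -
  have "\<bar>sinh y\<bar> \<le> cosh y" using sinh_le_cosh_real[of y] sinh_le_cosh_real[of "-y"] by auto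
  then have "sinh y * sinh h \<le> cosh y * \<bar>sinh h\<bar>"
    by (metis abs_ge_self abs_mult abs_ge_zero mult_right_mono order_trans)
  then have "cosh (y + h) \<le> cosh y * (cosh \<bar>h\<bar> + sinh \<bar>h\<bar>)"
    by (simp add: cosh_add distrib_left)
  then show ?thesis using cosh_plus_sinh[of "\<bar>h\<bar>"] by (simp add: mult.commute)
qed

lemma cosh_add_le_chord:
  fixes y h H :: real
  assumes H: "H > 0" and h: "\<bar>h\<bar> \<le> H"
  shows "cosh (y + h) \<le> cosh y * cosh H + h / H * sinh y * sinh H"
proof -
  have "exp h \<le> cosh H + h / H * sinh H" and "exp (-h) \<le> cosh H - h / H * sinh H"
    using exp_le_chord[OF H h] exp_le_chord[of H "-h"] H h by auto
  then have "exp y * exp h + exp (-y) * exp (-h)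
      \<le> exp y * (cosh H + h / H * sinh H) + exp (-y) * (cosh H - h / H * sinh H)"
    by (intro add_mono mult_left_mono) auto
  moreover have "2 * cosh (y + h) = exp y * exp h + exp (-y) * exp (-h)"
    by (simp add: cosh_field_def flip: exp_add)
  moreover have "2 * (cosh y * cosh H + h / H * sinh y * sinh H)
      = exp y * (cosh H + h / H * sinh H) + exp (-y) * (cosh H - h / H * sinh H)"
    using H by (simp add: cosh_field_def[of y] sinh_field_def[of y] field_simps)
  ultimately have "2 * cosh (y + h) \<le> 2 * (cosh y * cosh H + h / H * sinh y * sinh H)"
    by metis
  then show ?thesis by simp
qed

lemma cosh_add_sinh_pos:
  fixes H \<mu> :: real
  assumes H: "H > 0" and \<mu>: "\<bar>\<mu>\<bar> \<le> H"
  shows "cosh H + \<mu> / H * sinh H > 0"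
proof -
  have "-1 \<le> \<mu> / H" using \<mu> H by (simp add: le_divide_eq abs_le_iff)
  then have "-1 * sinh H \<le> \<mu> / H * sinh H" using H by (intro mult_right_mono) auto
  moreover have "cosh H - sinh H = exp (-H)" using cosh_plus_sinh[of "-H"] by simp
  ultimately show ?thesis using exp_gt_zero[of "-H"] by linarith
qed

lemma ln_cosh_add_sinh_le:
  fixes H \<mu> :: real
  assumes H: "H > 0" and \<mu>: "\<bar>\<mu>\<bar> \<le> H"
  shows "ln (cosh H + \<mu> / H * sinh H) \<le> \<mu> + H^2 / 2"
proof -
  define p where "p = (H + \<mu>) / (2*H)"
  have p: "p \<ge> 0" using \<mu> H by (simp add: p_def abs_le_iff)
  have "cosh H + \<mu> / H * sinh H = exp (-H) * (1 + p * (exp (2*H) - 1))"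
    using H by (simp add: p_def cosh_field_def sinh_field_def field_simps flip: exp_add)
  moreover have "1 + p * (exp (2*H) - 1) > 0" using p H by (intro add_pos_nonneg) auto
  ultimately have "ln (cosh H + \<mu> / H * sinh H) = - H + ln (1 + p * (exp (2*H) - 1))"
    by (simp add: ln_mult)
  also have "\<dots> \<le> - H + (2*H*p + (2*H)^2 / 8)"
    using Hoeffdings_lemma_aux[of "2*H" p] H p by simp
  also have "\<dots> = \<mu> + H^2 / 2" using H by (simp add: p_def field_simps power2_eq_square)
  finally show ?thesis .
qed

section \<open>The soft maximum\<close>

(* smax N lam s is the soft maximum of |s 1|, ..., |s N| at inverse temperature lam;
   smax_deriv N lam s x is its derivative at s in direction x. *)
definition cosh_sum :: "nat \<Rightarrow> real \<Rightarrow> (nat \<Rightarrow> real) \<Rightarrow> real" where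
  "cosh_sum N lam s = (\<Sum>j=1..N. cosh (lam * s j))"

definition smax :: "nat \<Rightarrow> real \<Rightarrow> (nat \<Rightarrow> real) \<Rightarrow> real" where
  "smax N lam s = ln (2 * cosh_sum N lam s) / lam"

definition smax_deriv :: "nat \<Rightarrow> real \<Rightarrow> (nat \<Rightarrow> real) \<Rightarrow> (nat \<Rightarrow> real) \<Rightarrow> real" where
  "smax_deriv N lam s x = (\<Sum>j=1..N. sinh (lam * s j) * x j) / cosh_sum N lam s"

lemma cosh_sum_pos: "N \<ge> 1 \<Longrightarrow> cosh_sum N lam s > 0"
  unfolding cosh_sum_def by (intro sum_pos) auto

lemma smax_zero: "smax N lam (\<lambda>_. 0) = ln (2 * real N) / lam"
  by (simp add: smax_def cosh_sum_def)

lemma abs_le_smax: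
  assumes lam: "lam > 0" and j: "j \<in> {1..N}"
  shows "\<bar>s j\<bar> \<le> smax N lam s"
proof -
  have "lam * \<bar>s j\<bar> = \<bar>lam * s j\<bar>" using lam by (simp add: abs_mult)
  then have "exp (lam * \<bar>s j\<bar>) = cosh \<bar>lam * s j\<bar> + sinh \<bar>lam * s j\<bar>"
    by (simp only: cosh_plus_sinh)
  also have "\<dots> \<le> 2 * cosh (lam * s j)"
    using sinh_le_cosh_real[of "\<bar>lam * s j\<bar>"] by simp
  also have "\<dots> \<le> 2 * cosh_sum N lam s"
    unfolding cosh_sum_def using j by (intro mult_left_mono member_le_sum) auto
  finally have "lam * \<bar>s j\<bar> \<le> ln (2 * cosh_sum N lam s)"
    by (metis exp_gt_zero exp_le_cancel_iff exp_ln less_le_trans)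
  then show ?thesis using lam by (simp add: smax_def field_simps)
qed

lemma maxZ_le_smax:
  assumes N: "N \<ge> 1" and lam: "lam > 0"
  shows "maxZ n N Z \<omega> \<le> smax N lam (\<lambda>j. \<Sum>i=1..n. Z i j (\<omega> i) / n)"
  unfolding maxZ_def
proof (subst Max_le_iff)
  show "\<forall>a\<in>(\<lambda>j. \<bar>1 / real n * (\<Sum>i=1..n. Z i j (\<omega> i))\<bar>) ` {1..N}.
      a \<le> smax N lam (\<lambda>j. \<Sum>i=1..n. Z i j (\<omega> i) / n)"
  proof
    fix a assume "a \<in> (\<lambda>j. \<bar>1 / real n * (\<Sum>i=1..n. Z i j (\<omega> i))\<bar>) ` {1..N}"
    then obtain j where j: "j \<in> {1..N}" and a: "a = \<bar>(\<Sum>i=1..n. Z i j (\<omega> i) / n)\<bar>"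
      by (auto simp: sum_divide_distrib)
    show "a \<le> smax N lam (\<lambda>j. \<Sum>i=1..n. Z i j (\<omega> i) / n)"
      unfolding a using abs_le_smax[OF lam j, of "\<lambda>j. \<Sum>i=1..n. Z i j (\<omega> i) / n"] by simp
  qed
qed (use N in auto)

lemma cosh_sum_shift_le:
  assumes lam: "lam \<ge> 0" and x: "\<And>j. j \<in> {1..N} \<Longrightarrow> \<bar>x j\<bar> \<le> a"
  shows "cosh_sum N lam (\<lambda>j. s j + x j) \<le> exp (lam * a) * cosh_sum N lam s"
  unfolding cosh_sum_def sum_distrib_left
proof (rule sum_mono)
  fix j assume "j \<in> {1..N}"
  then have "\<bar>lam * x j\<bar> \<le> lam * a" using x lam by (simp add: abs_mult mult_left_mono)
  have "cosh (lam * (s j + x j)) \<le> exp \<bar>lam * x j\<bar> * cosh (lam * s j)"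
    using cosh_add_le_exp_abs[of "lam * s j" "lam * x j"] by (simp add: distrib_left)
  also have "\<dots> \<le> exp (lam * a) * cosh (lam * s j)"
    using \<open>\<bar>lam * x j\<bar> \<le> lam * a\<close> by (intro mult_right_mono) auto
  finally show "cosh (lam * (s j + x j)) \<le> exp (lam * a) * cosh (lam * s j)" .
qed

lemma abs_smax_shift_le:
  assumes N: "N \<ge> 1" and lam: "lam > 0" and x: "\<And>j. j \<in> {1..N} \<Longrightarrow> \<bar>x j\<bar> \<le> a"
  shows "\<bar>smax N lam (\<lambda>j. s j + x j) - smax N lam s\<bar> \<le> a"
proof -
  have ln_le: "ln (2 * cosh_sum N lam t) \<le> lam * a + ln (2 * cosh_sum N lam t')"
    if "cosh_sum N lam t \<le> exp (lam * a) * cosh_sum N lam t'" for t t'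
  proof -
    have pos: "2 * cosh_sum N lam t > 0" "2 * cosh_sum N lam t' > 0" using cosh_sum_pos[OF N] by auto
    have "ln (2 * cosh_sum N lam t) \<le> ln (exp (lam * a) * (2 * cosh_sum N lam t'))"
      using that pos by (intro ln_mono) auto
    also have "\<dots> = lam * a + ln (2 * cosh_sum N lam t')"
      using pos by (simp add: ln_mult_pos)
    finally show ?thesis .
  qed
  have "cosh_sum N lam s = cosh_sum N lam (\<lambda>j. (s j + x j) + - x j)" by simp
  also have "\<dots> \<le> exp (lam * a) * cosh_sum N lam (\<lambda>j. s j + x j)"
    using x lam by (intro cosh_sum_shift_le) auto
  finally have "ln (2 * cosh_sum N lam s) \<le> lam * a + ln (2 * cosh_sum N lam (\<lambda>j. s j + x j))"
    by (rule ln_le)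
  moreover have "ln (2 * cosh_sum N lam (\<lambda>j. s j + x j)) \<le> lam * a + ln (2 * cosh_sum N lam s)"
    using x lam by (intro ln_le cosh_sum_shift_le) auto
  ultimately show ?thesis using lam
    by (simp add: smax_def abs_le_iff field_simps diff_divide_distrib[symmetric])
qed

lemma abs_smax_deriv_le:
  assumes N: "N \<ge> 1" and x: "\<And>j. j \<in> {1..N} \<Longrightarrow> \<bar>x j\<bar> \<le> a"
  shows "\<bar>smax_deriv N lam s x\<bar> \<le> a"
proof -
  have "\<bar>\<Sum>j=1..N. sinh (lam * s j) * x j\<bar> \<le> (\<Sum>j=1..N. \<bar>sinh (lam * s j)\<bar> * \<bar>x j\<bar>)"
    using sum_abs[of "\<lambda>j. sinh (lam * s j) * x j" "{1..N}"] by (simp add: abs_mult)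
  also have "\<dots> \<le> (\<Sum>j=1..N. cosh (lam * s j) * a)"
  proof (rule sum_mono)
    fix j assume "j \<in> {1..N}"
    moreover have "\<bar>sinh (lam * s j)\<bar> \<le> cosh (lam * s j)"
      using sinh_le_cosh_real[of "lam * s j"] sinh_le_cosh_real[of "- (lam * s j)"] by auto
    ultimately show "\<bar>sinh (lam * s j)\<bar> * \<bar>x j\<bar> \<le> cosh (lam * s j) * a"
      using x by (intro mult_mono) auto
  qed
  also have "\<dots> = a * cosh_sum N lam s" by (simp add: cosh_sum_def sum_distrib_left mult.commute)
  finally have "\<bar>\<Sum>j=1..N. sinh (lam * s j) * x j\<bar> \<le> a * cosh_sum N lam s" .
  moreover have C: "cosh_sum N lam s > 0" by (rule cosh_sum_pos[OF N])
  ultimately show ?thesis by (simp add: smax_deriv_def abs_divide pos_divide_le_eq)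
qed

lemma cosh_sum_shift_le_chord:
  assumes N: "N \<ge> 1" and H: "H > 0" and x: "\<And>j. j \<in> {1..N} \<Longrightarrow> \<bar>lam * x j\<bar> \<le> H"
  shows "cosh_sum N lam (\<lambda>j. s j + x j)
    \<le> cosh_sum N lam s * (cosh H + lam * smax_deriv N lam s x / H * sinh H)"
proof -
  have "cosh_sum N lam (\<lambda>j. s j + x j)
      \<le> (\<Sum>j=1..N. cosh (lam * s j) * cosh H + lam * x j / H * sinh (lam * s j) * sinh H)"
    unfolding cosh_sum_def using x cosh_add_le_chord[OF H] by (intro sum_mono) (simp add: distrib_left)
  also have "\<dots> = cosh H * cosh_sum N lam s + sinh H / H * lam * (\<Sum>j=1..N. sinh (lam * s j) * x j)"
    by (simp add: cosh_sum_def sum.distrib sum_distrib_left sum_distrib_right algebra_simps)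
  also have "\<dots> = cosh_sum N lam s * (cosh H + lam * smax_deriv N lam s x / H * sinh H)"
    using cosh_sum_pos[OF N, of lam s] by (simp add: smax_deriv_def field_simps)
  finally show ?thesis .
qed

lemma smax_shift_le:
  fixes s x :: "nat \<Rightarrow> real" and lam a :: real
  assumes N: "N \<ge> 1" and lam: "lam > 0" and a: "a \<ge> 0"
    and x: "\<And>j. j \<in> {1..N} \<Longrightarrow> \<bar>x j\<bar> \<le> a"
  shows "smax N lam (\<lambda>j. s j + x j) \<le> smax N lam s + smax_deriv N lam s x + lam * a^2 / 2"
proof (cases "a = 0")
  case True
  then have "x j = 0" if "j \<in> {1..N}" for j using x[OF that] by simp
  then show ?thesis by (simp add: smax_def smax_deriv_def cosh_sum_def True)
next
  case False
  define H where "H = lam * a"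
  define \<mu> where "\<mu> = lam * smax_deriv N lam s x"
  have H: "H > 0" using lam a False by (simp add: H_def)
  have \<mu>: "\<bar>\<mu>\<bar> \<le> H"
    using abs_smax_deriv_le[OF N x, where lam=lam and s=s] lam by (simp add: \<mu>_def H_def abs_mult mult_left_mono)
  have C: "cosh_sum N lam s > 0" by (rule cosh_sum_pos[OF N])
  have le: "cosh_sum N lam (\<lambda>j. s j + x j) \<le> cosh_sum N lam s * (cosh H + \<mu> / H * sinh H)"
    unfolding \<mu>_def using x lam by (intro cosh_sum_shift_le_chord[OF N H]) (simp add: H_def abs_mult mult_left_mono)
  have pos: "cosh H + \<mu> / H * sinh H > 0" by (rule cosh_add_sinh_pos[OF H \<mu>])
  have "ln (2 * cosh_sum N lam (\<lambda>j. s j + x j))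
      \<le> ln (2 * cosh_sum N lam s * (cosh H + \<mu> / H * sinh H))"
    using le cosh_sum_pos[OF N] pos by (intro ln_mono) auto
  also have "\<dots> = ln (2 * cosh_sum N lam s) + ln (cosh H + \<mu> / H * sinh H)"
    using pos C by (intro ln_mult_pos) auto
  also have "\<dots> \<le> ln (2 * cosh_sum N lam s) + \<mu> + H^2 / 2"
    using ln_cosh_add_sinh_le[OF H \<mu>] by simp
  also have "\<dots> = ln (2 * cosh_sum N lam s) + lam * (smax_deriv N lam s x + lam * a^2 / 2)"
    by (simp add: \<mu>_def H_def power2_eq_square algebra_simps)
  finally have "ln (2 * cosh_sum N lam (\<lambda>j. s j + x j)) / lam
      \<le> (ln (2 * cosh_sum N lam s) + lam * (smax_deriv N lam s x + lam * a^2 / 2)) / lam"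
    using lam by (intro divide_right_mono) auto
  also have "\<dots> = ln (2 * cosh_sum N lam s) / lam + (smax_deriv N lam s x + lam * a^2 / 2)"
    using lam by (simp add: add_divide_distrib)
  finally show ?thesis by (simp add: smax_def add.assoc)
qed

lemma borel_measurable_smax:
  assumes "\<And>j. j \<in> {1..N} \<Longrightarrow> (\<lambda>\<omega>. f \<omega> j) \<in> borel_measurable M"
  shows "(\<lambda>\<omega>. smax N lam (f \<omega>)) \<in> borel_measurable M"
proof -
  have "(\<lambda>\<omega>. cosh_sum N lam (f \<omega>)) \<in> borel_measurable M" unfolding cosh_sum_def
  proof (rule borel_measurable_sum)
    fix j assume "j \<in> {1..N}"
    then have [measurable]: "(\<lambda>\<omega>. f \<omega> j) \<in> borel_measurable M" by (rule assms)
    show "(\<lambda>\<omega>. cosh (lam * f \<omega> j)) \<in> borel_measurable M"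
      unfolding cosh_field_def by measurable
  qed
  then show ?thesis unfolding smax_def by measurable
qed

lemma borel_measurable_smax_sum:
  fixes Sp :: "nat \<Rightarrow> 'a measure" and Z :: "nat \<Rightarrow> nat \<Rightarrow> 'a \<Rightarrow> real"
  assumes "\<And>i j. i \<in> I \<Longrightarrow> j \<in> {1..N} \<Longrightarrow> Z i j \<in> borel_measurable (Sp i)"
  shows "(\<lambda>\<omega>. smax N lam (\<lambda>j. \<Sum>i\<in>I. Z i j (\<omega> i) / n)) \<in> borel_measurable (\<Pi>\<^sub>M i\<in>I. Sp i)"
proof (intro borel_measurable_smax borel_measurable_sum borel_measurable_divide borel_measurable_const)
  fix i j assume "j \<in> {1..N}" "i \<in> I"
  from measurable_comp[OF measurable_component_singleton[where M=Sp, OF \<open>i \<in> I\<close>] assms[OF this(2,1)]]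
  show "(\<lambda>\<omega>. Z i j (\<omega> i)) \<in> borel_measurable (\<Pi>\<^sub>M i\<in>I. Sp i)" by (simp add: comp_def)
qed

section \<open>Moments of the envelope\<close>

lemma powr_mult_powr_le_Young:
  fixes x M r p :: real
  assumes x: "x \<ge> 0" and M: "M > 0" and r: "0 < r" "r \<le> p"
  shows "x powr r * M powr (p - r) \<le> r / p * x powr p + (1 - r / p) * M powr p"
proof (cases "x = 0")
  case True
  have "0 \<le> (1 - r / p) * M powr p" using r M by (simp add: divide_le_eq)
  moreover have "x powr r = 0" "x powr p = 0" using True by simp_all
  ultimately show ?thesis by simp
next
  case False
  have "(x powr p) powr (r / p) * (M powr p) powr (1 - r / p) \<le> r / p * x powr p + (1 - r / p) * M powr p"
    using x M r False by (intro Youngs_inequality_0) auto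
  moreover have "(x powr p) powr (r / p) = x powr r" "(M powr p) powr (1 - r / p) = M powr (p - r)"
    using r by (simp_all add: powr_powr algebra_simps)
  ultimately show ?thesis by simp
qed

lemma (in prob_space) moment_le_of_higher_moment:
  fixes f :: "'a \<Rightarrow> real"
  assumes f[measurable]: "f \<in> borel_measurable M"
    and f0: "\<And>x. x \<in> space M \<Longrightarrow> f x \<ge> 0"
    and mom: "(\<integral>\<^sup>+x. ennreal (f x powr p) \<partial>M) \<le> ennreal (C powr p)"
    and C: "C > 0" and r: "0 < r" "r \<le> p"
  shows "integrable M (\<lambda>x. f x powr r)" "(\<integral>x. f x powr r \<partial>M) \<le> C powr r"
proof -
  have ip: "integrable M (\<lambda>x. f x powr p)"
  proof (rule integrableI_nonneg)
    show "(\<integral>\<^sup>+x. ennreal (f x powr p) \<partial>M) < \<infinity>"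
      using mom by (metis ennreal_less_top infinity_ennreal_def le_less_trans)
  qed simp_all
  have "ennreal (\<integral>x. f x powr p \<partial>M) = (\<integral>\<^sup>+x. ennreal (f x powr p) \<partial>M)"
    using ip by (intro nn_integral_eq_integral[symmetric]) auto
  then have Ip: "(\<integral>x. f x powr p \<partial>M) \<le> C powr p"
    using mom by (simp add: ennreal_le_iff[symmetric])
  define c where "c = C powr (p - r)"
  have c: "c > 0" using C by (simp add: c_def)
  \<comment> \<open>Young's inequality dominates \<open>f^r\<close> by an integrable affine function of \<open>f^p\<close>\<close>
  define g where "g = (\<lambda>x. (r / p * f x powr p + (1 - r / p) * C powr p) / c)"
  have fg: "f x powr r \<le> g x" if "x \<in> space M" for x
    using powr_mult_powr_le_Young[OF f0[OF that] C r] c by (simp add: g_def c_def field_simps)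
  have ig: "integrable M g" using ip by (simp add: g_def)
  show ir: "integrable M (\<lambda>x. f x powr r)"
    using fg by (intro Bochner_Integration.integrable_bound[OF ig]) (auto intro!: AE_I2 intro: order_trans[OF _ abs_ge_self])
  have "(\<integral>x. f x powr r \<partial>M) \<le> (\<integral>x. g x \<partial>M)"
    using fg by (intro integral_mono_AE ir ig AE_I2)
  also have "\<dots> = (r / p * (\<integral>x. f x powr p \<partial>M) + (1 - r / p) * C powr p) / c"
    using ip by (simp add: g_def prob_space)
  also have "\<dots> \<le> (r / p * C powr p + (1 - r / p) * C powr p) / c"
    using Ip r c by (intro divide_right_mono add_right_mono mult_left_mono) auto
  also have "\<dots> = C powr r" using c C by (simp add: c_def field_simps flip: powr_add)
  finally show "(\<integral>x. f x powr r \<partial>M) \<le> C powr r" .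
qed

lemma (in prob_space) moment_power_le_of_higher_moment:
  fixes f :: "'a \<Rightarrow> real"
  assumes "f \<in> borel_measurable M" and f0: "\<And>x. x \<in> space M \<Longrightarrow> f x \<ge> 0"
    and "(\<integral>\<^sup>+x. ennreal (f x powr p) \<partial>M) \<le> ennreal (C powr p)"
    and C: "C > 0" and k: "k \<ge> 1" "real k \<le> p"
  shows "integrable M (\<lambda>x. f x ^ k)" "(\<integral>x. f x ^ k \<partial>M) \<le> C ^ k"
proof -
  have eq: "f x powr real k = f x ^ k" if "x \<in> space M" for x
    using f0[OF that] k by (cases "f x = 0") (auto simp: powr_realpow)
  have r: "0 < real k" "real k \<le> p" using k by auto
  have "integrable M (\<lambda>x. f x powr real k) = integrable M (\<lambda>x. f x ^ k)"
    using eq by (intro Bochner_Integration.integrable_cong) auto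
  then show "integrable M (\<lambda>x. f x ^ k)"
    using moment_le_of_higher_moment(1)[OF assms(1-4) r] by simp
  have "(\<integral>x. f x ^ k \<partial>M) = (\<integral>x. f x powr real k \<partial>M)"
    using eq by (intro Bochner_Integration.integral_cong) auto
  also have "\<dots> \<le> C powr real k" by (rule moment_le_of_higher_moment(2)[OF assms(1-4) r])
  finally show "(\<integral>x. f x ^ k \<partial>M) \<le> C ^ k" using C by (simp add: powr_realpow)
qed

lemma (in prob_space) scaled_envelope_moments:
  fixes e :: "'a \<Rightarrow> real" and C p :: real and n q :: nat
  assumes e: "e \<in> borel_measurable M" and e0: "\<And>y. y \<in> space M \<Longrightarrow> e y \<ge> 0"
    and mom: "(\<integral>\<^sup>+y. ennreal (e y powr p) \<partial>M) \<le> ennreal (C powr p)"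
    and C: "C > 0" and n: "n \<ge> 1" and q: "q \<ge> 2" "real q \<le> p"
  shows "integrable M (\<lambda>y. e y / n)" "integrable M (\<lambda>y. (e y / n)^2)" "integrable M (\<lambda>y. (e y / n)^q)"
    and "(\<integral>y. (e y / n)^2 \<partial>M) \<le> (C / sqrt n)^2 / n"
    and "(\<integral>y. (e y / n)^q \<partial>M) \<le> (C / sqrt n)^q / n"
proof -
  note m = moment_power_le_of_higher_moment[OF e e0 mom C]
  have m1: "integrable M (\<lambda>y. e y ^ 1)" and m2: "integrable M (\<lambda>y. e y ^ 2)" "(\<integral>y. e y ^ 2 \<partial>M) \<le> C^2"
    and mq: "integrable M (\<lambda>y. e y ^ q)" "(\<integral>y. e y ^ q \<partial>M) \<le> C^q"
    using m[of 1] m[of 2] m[of q] q by auto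
  show "integrable M (\<lambda>y. e y / n)" "integrable M (\<lambda>y. (e y / n)^2)" "integrable M (\<lambda>y. (e y / n)^q)"
    using m1 m2 mq by (simp_all add: power_divide)
  have "(\<integral>y. (e y / n)^2 \<partial>M) = (\<integral>y. e y ^ 2 \<partial>M) / n^2" by (simp add: power_divide)
  also have "\<dots> \<le> C^2 / n^2" using m2 by (simp add: divide_right_mono)
  also have "\<dots> = (C / sqrt n)^2 / n" by (simp add: power_divide power2_eq_square)
  finally show "(\<integral>y. (e y / n)^2 \<partial>M) \<le> (C / sqrt n)^2 / n" .
  have "(\<integral>y. (e y / n)^q \<partial>M) = (\<integral>y. e y ^ q \<partial>M) / n^q" by (simp add: power_divide)
  also have "\<dots> \<le> (C / n)^q" using mq by (simp add: divide_right_mono power_divide)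
  also have "\<dots> \<le> (C / sqrt n)^q / n" using C n q by (intro power_divide_le_power_divide_sqrt) auto
  finally show "(\<integral>y. (e y / n)^q \<partial>M) \<le> (C / sqrt n)^q / n" .
qed

section \<open>Adding one summand\<close>

definition shifted_pos_power :: "real \<Rightarrow> nat \<Rightarrow> real \<Rightarrow> real" where
  "shifted_pos_power K q d = (max 0 (d + K))^q"

(* The relative growth, per summand, of E [(D + K)_+^q + K^q] when the summands have scale
   M / sqrt n = r * K. *)
definition growth_rate :: "nat \<Rightarrow> real \<Rightarrow> real" where
  "growth_rate q r = q * r / 4 + (real q * (real q - 1) / 2) * (exp 1 * r^2 + (real q + 1)^(q-2) * r^q)"

lemma growth_rate_nonneg: "r \<ge> 0 \<Longrightarrow> growth_rate q r \<ge> 0"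
  unfolding growth_rate_def by (cases q) (auto intro!: add_nonneg_nonneg mult_nonneg_nonneg)

lemma shifted_pos_power_smax_shift_le:
  fixes s x :: "nat \<Rightarrow> real" and lam a c K v :: real and N q :: nat
  assumes N: "N \<ge> 1" and lam: "lam > 0" and q: "q \<ge> 2" and a: "a \<ge> 0"
    and x: "\<And>j. j \<in> {1..N} \<Longrightarrow> \<bar>x j\<bar> \<le> a"
  defines "v \<equiv> max 0 (smax N lam s - c + K)"
  shows "shifted_pos_power K q (smax N lam (\<lambda>j. s j + x j) - c)
    \<le> v^q + q * v^(q-1) * (smax_deriv N lam s x + lam * a^2 / 2)
      + (real q * (real q - 1) / 2) * (exp 1 * v^(q-2) * a^2 + (real q + 1)^(q-2) * a^q)"
proof -
  define u where "u = smax N lam (\<lambda>j. s j + x j) - smax N lam s"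
  have u_abs: "\<bar>u\<bar> \<le> a" unfolding u_def by (rule abs_smax_shift_le[OF N lam x])
  have u_le: "u \<le> smax_deriv N lam s x + lam * a^2 / 2"
    using smax_shift_le[where s=s and x=x, OF N lam a x] by (simp add: u_def)
  have v: "v \<ge> 0" by (simp add: v_def)
  have c2: "(real q * (real q - 1) / 2) \<ge> 0" using q by simp
  have "shifted_pos_power K q (smax N lam (\<lambda>j. s j + x j) - c)
      = (max 0 ((smax N lam s - c + K) + u))^q"
    by (simp add: shifted_pos_power_def u_def algebra_simps)
  also have "\<dots> \<le> v^q + q * v^(q-1) * u + (real q * (real q - 1) / 2) * (v + \<bar>u\<bar>)^(q-2) * u^2"
    using max_0_power_add_le[OF q] by (simp add: v_def)
  also have "\<dots> \<le> v^q + q * v^(q-1) * (smax_deriv N lam s x + lam * a^2 / 2)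
      + (real q * (real q - 1) / 2) * ((v + a)^(q-2) * a^2)"
  proof -
    have "u^2 \<le> a^2" using u_abs by (metis abs_ge_zero power2_abs power_mono)
    moreover have "(v + \<bar>u\<bar>)^(q-2) \<le> (v + a)^(q-2)" using u_abs v by (intro power_mono) auto
    ultimately have "(v + \<bar>u\<bar>)^(q-2) * u^2 \<le> (v + a)^(q-2) * a^2"
      using v a by (intro mult_mono) auto
    then have "(real q * (real q - 1) / 2) * ((v + \<bar>u\<bar>)^(q-2) * u^2)
        \<le> (real q * (real q - 1) / 2) * ((v + a)^(q-2) * a^2)"
      by (rule mult_left_mono[OF _ c2])
    then have "(real q * (real q - 1) / 2) * (v + \<bar>u\<bar>)^(q-2) * u^2
        \<le> (real q * (real q - 1) / 2) * ((v + a)^(q-2) * a^2)"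
      by (simp only: mult.assoc)
    moreover have "q * v^(q-1) * u \<le> q * v^(q-1) * (smax_deriv N lam s x + lam * a^2 / 2)"
      using u_le v by (intro mult_left_mono) auto
    ultimately show ?thesis by linarith
  qed
  also have "\<dots> \<le> v^q + q * v^(q-1) * (smax_deriv N lam s x + lam * a^2 / 2)
      + (real q * (real q - 1) / 2) * (exp 1 * v^(q-2) * a^2 + (real q + 1)^(q-2) * a^q)"
    using power_add_mult_square_le[OF q v a] c2 by (intro add_left_mono mult_left_mono) auto
  finally show ?thesis .
qed

lemma step_moment_terms_le_growth_rate:
  fixes n q :: nat and U K v A2 Aq :: real
  assumes n: "n \<ge> 1" and U: "U > 0" and K: "K > 0" and q: "q \<ge> 2" and v: "v \<ge> 0"
    and A2: "0 \<le> A2" "A2 \<le> U^2 / n" and Aq: "0 \<le> Aq" "Aq \<le> U^q / n"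
  shows "v^q + q * v^(q-1) * (A2 / (4*U))
      + (real q * (real q - 1) / 2) * (exp 1 * v^(q-2) * A2 + (real q + 1)^(q-2) * Aq) + K^q
    \<le> (1 + growth_rate q (U/K) / n) * (v^q + K^q)"
proof -
  define r where "r = U / K"
  define c2 where "c2 = real q * (real q - 1) / 2"
  define S where "S = v^q + K^q"
  have r: "r > 0" using U K by (simp add: r_def)
  have nr: "real n \<ge> 1" using n by simp
  have c2: "c2 \<ge> 0" using q by (simp add: c2_def)
  have S1: "K * v^(q-1) \<le> S" using mult_power_le_power_add_power[of v K 1 q] v K q by (simp add: S_def)
  have S2: "K^2 * v^(q-2) \<le> S" using mult_power_le_power_add_power[of v K 2 q] v K q by (simp add: S_def)
  have S0: "K^q \<le> S" using v by (simp add: S_def)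
  have "v^q + q * v^(q-1) * (A2 / (4*U)) + c2 * (exp 1 * v^(q-2) * A2 + (real q + 1)^(q-2) * Aq) + K^q
      \<le> v^q + q * v^(q-1) * (U^2 / n / (4*U))
        + c2 * (exp 1 * v^(q-2) * (U^2 / n) + (real q + 1)^(q-2) * (U^q / n)) + K^q"
    using A2 Aq U v c2 by (intro add_mono order_refl mult_left_mono divide_right_mono) auto
  also have "\<dots> = S + (q * r / 4 * (K * v^(q-1)) + c2 * exp 1 * r^2 * (K^2 * v^(q-2))
      + c2 * (real q + 1)^(q-2) * r^q * K^q) / n"
    using U K nr by (simp add: r_def S_def power_divide power2_eq_square field_simps)
  also have "\<dots> \<le> S + (q * r / 4 * S + c2 * exp 1 * r^2 * S + c2 * (real q + 1)^(q-2) * r^q * S) / n"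
    using S0 S1 S2 r c2 by (intro add_left_mono divide_right_mono add_mono mult_left_mono) auto
  also have "\<dots> = (1 + growth_rate q r / n) * S"
    using nr by (simp add: growth_rate_def c2_def field_simps)
  finally show ?thesis by (simp add: r_def S_def c2_def)
qed

lemma (in prob_space) integral_smax_deriv_eq_0:
  assumes Y: "\<And>j. j \<in> {1..N} \<Longrightarrow> integrable M (Y j)"
    and cen: "\<And>j. j \<in> {1..N} \<Longrightarrow> (\<integral>y. Y j y \<partial>M) = 0"
  shows "integrable M (\<lambda>y. smax_deriv N lam s (\<lambda>j. Y j y))"
    and "(\<integral>y. smax_deriv N lam s (\<lambda>j. Y j y) \<partial>M) = 0"
proof -
  have eq: "(\<lambda>y. smax_deriv N lam s (\<lambda>j. Y j y))
      = (\<lambda>y. \<Sum>j=1..N. sinh (lam * s j) / cosh_sum N lam s * Y j y)"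
    by (auto simp: smax_deriv_def sum_divide_distrib intro!: ext sum.cong)
  show "integrable M (\<lambda>y. smax_deriv N lam s (\<lambda>j. Y j y))"
    unfolding eq using Y by (intro Bochner_Integration.integrable_sum integrable_mult_right)
  show "(\<integral>y. smax_deriv N lam s (\<lambda>j. Y j y) \<partial>M) = 0"
    unfolding eq using Y cen by (subst Bochner_Integration.integral_sum) auto
qed

lemma (in prob_space) smax_step_expectation:
  fixes Y :: "nat \<Rightarrow> 'a \<Rightarrow> real" and b :: "'a \<Rightarrow> real" and s :: "nat \<Rightarrow> real"
    and N n q :: nat and U K c :: real
  assumes N: "N \<ge> 1" and n: "n \<ge> 1" and U: "U > 0" and K: "K > 0" and q: "q \<ge> 2"
    and Y: "\<And>j. j \<in> {1..N} \<Longrightarrow> Y j \<in> borel_measurable M"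
    and env: "\<And>j y. j \<in> {1..N} \<Longrightarrow> y \<in> space M \<Longrightarrow> \<bar>Y j y\<bar> \<le> b y"
    and cen: "\<And>j. j \<in> {1..N} \<Longrightarrow> (\<integral>y. Y j y \<partial>M) = 0"
    and b: "integrable M b" "integrable M (\<lambda>y. b y ^ 2)" "integrable M (\<lambda>y. b y ^ q)"
    and b2: "(\<integral>y. b y ^ 2 \<partial>M) \<le> U^2 / n" and bq: "(\<integral>y. b y ^ q \<partial>M) \<le> U^q / n"
  shows "(\<integral>\<^sup>+y. ennreal (shifted_pos_power K q (smax N (1 / (2*U)) (\<lambda>j. s j + Y j y) - c) + K^q) \<partial>M)
    \<le> ennreal ((1 + growth_rate q (U/K) / n)
        * (shifted_pos_power K q (smax N (1 / (2*U)) s - c) + K^q))"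
proof -
  define lam where "lam = 1 / (2*U)"
  define v where "v = max 0 (smax N lam s - c + K)"
  define c2 where "c2 = real q * (real q - 1) / 2"
  define g where "g = (\<lambda>y. smax_deriv N lam s (\<lambda>j. Y j y))"
  have lam: "lam > 0" using U by (simp add: lam_def)
  have v: "v \<ge> 0" by (simp add: v_def)
  have b0: "b y \<ge> 0" if "y \<in> space M" for y using env[OF _ that, of 1] N by force
  have iY: "integrable M (Y j)" if "j \<in> {1..N}" for j
    using b0 env[OF that] by (intro Bochner_Integration.integrable_bound[OF b(1) Y[OF that]]) (auto intro!: AE_I2)
  note g = integral_smax_deriv_eq_0[where Y=Y and N=N and lam=lam and s=s, OF iY cen, folded g_def]
  \<comment> \<open>the second-order Taylor bound; its linear term \<open>g\<close> is centred\<close>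
  define h where "h y = v^q + K^q + q * v^(q-1) * g y
      + (q * v^(q-1) * lam / 2 + c2 * exp 1 * v^(q-2)) * b y ^ 2 + c2 * (real q + 1)^(q-2) * b y ^ q" for y
  have ih: "integrable M h" unfolding h_def using g(1) b by auto
  have pt: "shifted_pos_power K q (smax N lam (\<lambda>j. s j + Y j y) - c) + K^q \<le> h y" if y: "y \<in> space M" for y
    using shifted_pos_power_smax_shift_le[OF N lam q b0[OF y], where x="\<lambda>j. Y j y" and s=s and c=c and K=K]
      env[OF _ y]
    by (simp add: h_def g_def v_def c2_def power_mult_distrib algebra_simps)
  have "(\<integral>y. h y \<partial>M) = v^q + q * v^(q-1) * ((\<integral>y. b y ^ 2 \<partial>M) / (4*U))
      + c2 * (exp 1 * v^(q-2) * (\<integral>y. b y ^ 2 \<partial>M) + (real q + 1)^(q-2) * (\<integral>y. b y ^ q \<partial>M)) + K^q"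
    unfolding h_def using g b U by (simp add: prob_space lam_def field_simps)
  also have "\<dots> \<le> (1 + growth_rate q (U/K) / n) * (v^q + K^q)"
    unfolding c2_def using b0 b2 bq
    by (intro step_moment_terms_le_growth_rate[OF n U K q v]) (auto intro!: integral_nonneg_AE AE_I2)
  finally have Ih: "(\<integral>y. h y \<partial>M) \<le> (1 + growth_rate q (U/K) / n) * (v^q + K^q)" .
  have h0: "0 \<le> h y" if "y \<in> space M" for y
  proof -
    have "0 \<le> shifted_pos_power K q (smax N lam (\<lambda>j. s j + Y j y) - c) + K^q"
      using K by (simp add: shifted_pos_power_def)
    then show ?thesis using pt[OF that] by linarith
  qed
  have "(\<integral>\<^sup>+y. ennreal (shifted_pos_power K q (smax N lam (\<lambda>j. s j + Y j y) - c) + K^q) \<partial>M)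
      \<le> (\<integral>\<^sup>+y. ennreal (h y) \<partial>M)"
    using pt by (intro nn_integral_mono ennreal_leI) auto
  also have "\<dots> = ennreal (\<integral>y. h y \<partial>M)"
    using h0 by (intro nn_integral_eq_integral[OF ih] AE_I2) auto
  also have "\<dots> \<le> ennreal ((1 + growth_rate q (U/K) / n) * (v^q + K^q))"
    using Ih by (rule ennreal_leI)
  finally show ?thesis by (simp add: lam_def v_def shifted_pos_power_def)
qed

lemma (in prob_space) smax_add_scaled_summand_expectation:
  fixes Z :: "nat \<Rightarrow> 'a \<Rightarrow> real" and e :: "'a \<Rightarrow> real" and s :: "nat \<Rightarrow> real"
    and N n q :: nat and C K p c :: real
  assumes N: "N \<ge> 1" and n: "n \<ge> 1" and C: "C > 0" and K: "K > 0" and q: "q \<ge> 2" "real q \<le> p"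
    and Z: "\<And>j. j \<in> {1..N} \<Longrightarrow> Z j \<in> borel_measurable M" and e: "e \<in> borel_measurable M"
    and env: "\<And>j y. j \<in> {1..N} \<Longrightarrow> y \<in> space M \<Longrightarrow> \<bar>Z j y\<bar> \<le> e y"
    and mom: "(\<integral>\<^sup>+y. ennreal (e y powr p) \<partial>M) \<le> ennreal (C powr p)"
    and cen: "\<And>j. j \<in> {1..N} \<Longrightarrow> (\<integral>y. Z j y \<partial>M) = 0"
  defines "U \<equiv> C / sqrt n"
  shows "(\<integral>\<^sup>+y. ennreal (shifted_pos_power K q (smax N (1 / (2*U)) (\<lambda>j. s j + Z j y / n) - c) + K^q) \<partial>M)
    \<le> ennreal ((1 + growth_rate q (U/K) / n)
        * (shifted_pos_power K q (smax N (1 / (2*U)) s - c) + K^q))"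
proof -
  have e0: "0 \<le> e y" if "y \<in> space M" for y using env[OF _ that, of 1] N by force
  note mo = scaled_envelope_moments[OF e e0 mom C n q]
  have U: "U > 0" using C n by (simp add: U_def)
  show ?thesis
  proof (rule smax_step_expectation[OF N n U K q(1) _ _ _ mo(1-3)])
    show "(\<integral>y. (e y / n)^2 \<partial>M) \<le> U^2 / n" and "(\<integral>y. (e y / n)^q \<partial>M) \<le> U^q / n"
      using mo(4,5) by (simp_all add: U_def)
  qed (use n Z env cen in \<open>auto simp: abs_divide divide_right_mono\<close>)
qed

lemma smax_partial_sum_expectation:
  fixes Sp :: "nat \<Rightarrow> 'a measure" and Z :: "nat \<Rightarrow> nat \<Rightarrow> 'a \<Rightarrow> real" and E :: "nat \<Rightarrow> 'a \<Rightarrow> real"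
    and n N q k :: nat and M K p c :: real
  assumes prob: "\<And>i. prob_space (Sp i)" and N: "N \<ge> 1" and n: "n \<ge> 1"
    and M: "M > 0" and K: "K > 0" and q: "q \<ge> 2" and qp: "real q \<le> p"
    and Zmeas: "\<And>i j. i \<in> {1..n} \<Longrightarrow> j \<in> {1..N} \<Longrightarrow> Z i j \<in> borel_measurable (Sp i)"
    and Emeas: "\<And>i. i \<in> {1..n} \<Longrightarrow> E i \<in> borel_measurable (Sp i)"
    and env: "\<And>i j x. i \<in> {1..n} \<Longrightarrow> j \<in> {1..N} \<Longrightarrow> x \<in> space (Sp i) \<Longrightarrow> \<bar>Z i j x\<bar> \<le> E i x"
    and mom: "\<And>i. i \<in> {1..n} \<Longrightarrow> (\<integral>\<^sup>+ x. ennreal (E i x powr p) \<partial>Sp i) \<le> ennreal (M powr p)"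
    and centered: "\<And>i j. i \<in> {1..n} \<Longrightarrow> j \<in> {1..N} \<Longrightarrow> (\<integral>x. Z i j x \<partial>Sp i) = 0"
    and k: "k \<le> n"
  defines "U \<equiv> M / sqrt n"
  shows "(\<integral>\<^sup>+\<omega>. ennreal (shifted_pos_power K q
              (smax N (1 / (2*U)) (\<lambda>j. \<Sum>i=1..k. Z i j (\<omega> i) / n) - c) + K^q) \<partial>(\<Pi>\<^sub>M i\<in>{1..k}. Sp i))
    \<le> ennreal ((1 + growth_rate q (U/K) / n)^k
        * (shifted_pos_power K q (smax N (1 / (2*U)) (\<lambda>_. 0) - c) + K^q))"
  using k
proof (induction k)
  case 0
  interpret prob_space "\<Pi>\<^sub>M i\<in>{}. Sp i" by (rule prob_space_PiM) (auto intro: prob)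
  show ?case by (simp add: emeasure_space_1)
next
  case (Suc k)
  interpret product_prob_space Sp by (rule product_prob_spaceI) (rule prob)
  define lam where "lam = 1 / (2*U)"
  define \<rho> where "\<rho> = 1 + growth_rate q (U/K) / n"
  define \<Phi> where "\<Phi> m \<omega> = shifted_pos_power K q (smax N lam (\<lambda>j. \<Sum>i=1..m. Z i j (\<omega> i) / n) - c) + K^q"
    for m \<omega>
  have U: "U > 0" using M n by (simp add: U_def)
  have \<rho>: "\<rho> \<ge> 0" using growth_rate_nonneg[of "U/K" q] U K by (simp add: \<rho>_def)
  have sk: "Suc k \<in> {1..n}" using Suc.prems by simp
  have meas: "(\<lambda>\<omega>. ennreal (\<Phi> m \<omega>)) \<in> borel_measurable (\<Pi>\<^sub>M i\<in>{1..m}. Sp i)" if "m \<le> n" for m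
    using that unfolding \<Phi>_def shifted_pos_power_def
    by (intro measurable_compose[OF _ measurable_ennreal] borel_measurable_add borel_measurable_power
        borel_measurable_max borel_measurable_const borel_measurable_diff borel_measurable_smax_sum Zmeas)
      auto
  have "(\<integral>\<^sup>+\<omega>. ennreal (\<Phi> (Suc k) \<omega>) \<partial>(\<Pi>\<^sub>M i\<in>{1..Suc k}. Sp i))
      = (\<integral>\<^sup>+x. (\<integral>\<^sup>+y. ennreal (\<Phi> (Suc k) (x(Suc k := y))) \<partial>Sp (Suc k)) \<partial>(\<Pi>\<^sub>M i\<in>{1..k}. Sp i))"
    using meas[OF Suc.prems] by (simp add: atLeastAtMostSuc_conv product_nn_integral_insert)
  also have "\<dots> \<le> (\<integral>\<^sup>+x. ennreal (\<rho> * \<Phi> k x) \<partial>(\<Pi>\<^sub>M i\<in>{1..k}. Sp i))"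
  proof (rule nn_integral_mono)
    fix x
    have "\<Phi> (Suc k) (x(Suc k := y)) = shifted_pos_power K q
        (smax N lam (\<lambda>j. (\<Sum>i=1..k. Z i j (x i) / n) + Z (Suc k) j y / n) - c) + K^q" for y
      by (simp add: \<Phi>_def add.commute)
    moreover have "(\<integral>\<^sup>+y. ennreal (shifted_pos_power K q
        (smax N lam (\<lambda>j. (\<Sum>i=1..k. Z i j (x i) / n) + Z (Suc k) j y / n) - c) + K^q) \<partial>Sp (Suc k))
      \<le> ennreal (\<rho> * \<Phi> k x)"
      unfolding \<Phi>_def \<rho>_def lam_def U_def
      by (rule prob_space.smax_add_scaled_summand_expectation[OF prob N n M K q qp
            Zmeas[OF sk] Emeas[OF sk] env[OF sk] mom[OF sk] centered[OF sk]])
    ultimately show "(\<integral>\<^sup>+y. ennreal (\<Phi> (Suc k) (x(Suc k := y))) \<partial>Sp (Suc k)) \<le> ennreal (\<rho> * \<Phi> k x)"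
      by simp
  qed
  also have "\<dots> = ennreal \<rho> * (\<integral>\<^sup>+\<omega>. ennreal (\<Phi> k \<omega>) \<partial>(\<Pi>\<^sub>M i\<in>{1..k}. Sp i))"
    using meas[of k] Suc.prems \<rho> by (simp add: ennreal_mult' nn_integral_cmult)
  also have "\<dots> \<le> ennreal \<rho> * ennreal (\<rho>^k * (shifted_pos_power K q (smax N lam (\<lambda>_. 0) - c) + K^q))"
    using Suc by (intro mult_left_mono) (auto simp: \<Phi>_def \<rho>_def lam_def)
  finally show ?case
    using \<rho> by (simp add: \<Phi>_def \<rho>_def lam_def ennreal_mult'[symmetric] mult.assoc)
qed

lemma smax_sum_expectation_le_exp:
  fixes Sp :: "nat \<Rightarrow> 'a measure" and Z :: "nat \<Rightarrow> nat \<Rightarrow> 'a \<Rightarrow> real" and E :: "nat \<Rightarrow> 'a \<Rightarrow> real"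
    and n N q :: nat and M K p :: real
  assumes n: "n \<ge> 1" and N: "N \<ge> 1"
    and prob: "\<And>i. i \<in> {1..n} \<Longrightarrow> prob_space (Sp i)"
    and Zmeas: "\<And>i j. i \<in> {1..n} \<Longrightarrow> j \<in> {1..N} \<Longrightarrow> Z i j \<in> borel_measurable (Sp i)"
    and Emeas: "\<And>i. i \<in> {1..n} \<Longrightarrow> E i \<in> borel_measurable (Sp i)"
    and env: "\<And>i j x. i \<in> {1..n} \<Longrightarrow> j \<in> {1..N} \<Longrightarrow> x \<in> space (Sp i) \<Longrightarrow> \<bar>Z i j x\<bar> \<le> E i x"
    and M: "M > 0"
    and mom: "\<And>i. i \<in> {1..n} \<Longrightarrow> (\<integral>\<^sup>+ x. ennreal (E i x powr p) \<partial>Sp i) \<le> ennreal (M powr p)"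
    and centered: "\<And>i j. i \<in> {1..n} \<Longrightarrow> j \<in> {1..N} \<Longrightarrow> (\<integral>x. Z i j x \<partial>Sp i) = 0"
    and K: "K > 0" and q: "q \<ge> 2" and qp: "real q \<le> p"
  defines "U \<equiv> M / sqrt n"
  shows "(\<integral>\<^sup>+\<omega>. ennreal (shifted_pos_power K q (smax N (1 / (2*U)) (\<lambda>j. \<Sum>i=1..n. Z i j (\<omega> i) / n)
              - smax N (1 / (2*U)) (\<lambda>_. 0)) + K^q) \<partial>(\<Pi>\<^sub>M i\<in>{1..n}. Sp i))
    \<le> ennreal (exp (growth_rate q (U/K)) * (2 * K^q))"
proof -
  \<comment> \<open>the factors outside \<open>{1..n}\<close> are irrelevant; make them probability spaces too\<close>
  define Sp' where "Sp' i = (if i \<in> {1..n} then Sp i else return (count_space UNIV) undefined)" for i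
  have prob': "prob_space (Sp' i)" for i by (auto simp: Sp'_def prob intro: prob_space_return)
  have PiM_eq: "(\<Pi>\<^sub>M i\<in>{1..n}. Sp i) = (\<Pi>\<^sub>M i\<in>{1..n}. Sp' i)" by (rule PiM_cong) (auto simp: Sp'_def)
  have U: "U > 0" using M n by (simp add: U_def)
  define g where "g = growth_rate q (U/K)"
  have g: "g \<ge> 0" using growth_rate_nonneg[of "U/K" q] U K by (simp add: g_def)
  have "(1 + g / n)^n \<le> exp (g / n)^n"
    using g by (intro power_mono) auto
  also have "\<dots> = exp g" using n by (simp flip: exp_of_nat_mult)
  finally have bound: "(1 + g / n)^n * (2 * K^q) \<le> exp g * (2 * K^q)"
    using K by (intro mult_right_mono) auto
  have "(\<integral>\<^sup>+\<omega>. ennreal (shifted_pos_power K q (smax N (1 / (2*U)) (\<lambda>j. \<Sum>i=1..n. Z i j (\<omega> i) / n)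
              - smax N (1 / (2*U)) (\<lambda>_. 0)) + K^q) \<partial>(\<Pi>\<^sub>M i\<in>{1..n}. Sp' i))
    \<le> ennreal ((1 + g / n)^n * (shifted_pos_power K q
        (smax N (1 / (2*U)) (\<lambda>_. 0) - smax N (1 / (2*U)) (\<lambda>_. 0)) + K^q))"
    unfolding U_def g_def
    by (rule smax_partial_sum_expectation[where Sp=Sp' and Z=Z and E=E and k=n, OF prob' N n M K q qp])
      (auto simp: Sp'_def Zmeas Emeas env mom centered)
  also have "\<dots> = ennreal ((1 + g / n)^n * (2 * K^q))" using K by (simp add: shifted_pos_power_def)
  also have "\<dots> \<le> ennreal (exp g * (2 * K^q))" using bound by (rule ennreal_leI)
  finally show ?thesis unfolding PiM_eq g_def .
qed

section \<open>Choice of the shift\<close>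

lemma growth_rate_le_1:
  assumes q: "q \<ge> 2"
  shows "growth_rate q (1 / (2 * real q)) \<le> 1"
proof -
  define c2 where "c2 = real q * (real q - 1) / 2"
  have qr: "real q \<ge> 2" using q by simp
  have c2a: "c2 \<le> real q ^ 2 / 2" and c2b: "c2 \<le> (real q + 1)^2 / 2"
    using qr by (simp_all add: c2_def power2_eq_square algebra_simps)
  have t2: "c2 * (exp 1 * (1 / (2 * real q))^2) \<le> 3/8"
  proof -
    have "c2 * (exp 1 * (1 / (2 * real q))^2) = c2 * (exp 1 / (4 * real q ^ 2))"
      by (simp add: power_divide power_mult_distrib)
    also have "\<dots> \<le> real q ^ 2 / 2 * (exp 1 / (4 * real q ^ 2))"
      using c2a by (rule mult_right_mono) simp
    also have "\<dots> = exp 1 / 8" using qr by (simp add: field_simps)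
    finally show ?thesis using exp_le by linarith
  qed
  have t3: "c2 * ((real q + 1)^(q-2) * (1 / (2 * real q))^q) \<le> 3/8"
  proof -
    have "c2 * (real q + 1)^(q-2) \<le> (real q + 1)^2 / 2 * (real q + 1)^(q-2)"
      using c2b by (intro mult_right_mono) auto
    also have "\<dots> = (real q + 1)^q / 2"
      using q by (metis (no_types) le_add_diff_inverse power_add times_divide_eq_left)
    finally have "c2 * (real q + 1)^(q-2) * (1 / (2 * real q))^q \<le> (real q + 1)^q / 2 * (1 / (2 * real q))^q"
      by (rule mult_right_mono) simp
    then have "c2 * ((real q + 1)^(q-2) * (1 / (2 * real q))^q) \<le> (real q + 1)^q / 2 * (1 / (2 * real q))^q"
      by (simp only: mult.assoc)
    also have "\<dots> = (1 + 1 / real q)^q / (2 * 2^q)"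
      using qr by (simp add: power_divide power_mult_distrib field_simps)
    also have "\<dots> \<le> exp 1 / (2 * 4)"
    proof (rule frac_le)
      have "(2::real)^2 \<le> 2^q" using q by (intro power_increasing) auto
      then show "2 * 4 \<le> 2 * (2::real)^q" by simp
    qed (use one_plus_inverse_power_le_exp in auto)
    finally show ?thesis using exp_le by linarith
  qed
  have "growth_rate q (1 / (2 * real q))
      = 1/8 + c2 * (exp 1 * (1 / (2 * real q))^2) + c2 * ((real q + 1)^(q-2) * (1 / (2 * real q))^q)"
    using qr by (simp add: growth_rate_def c2_def distrib_left)
  then show ?thesis using t2 t3 by linarith
qed

lemma growth_rate_2_le: "growth_rate 2 (1/6) \<le> 1/4"
  using exp_le by (simp add: growth_rate_def power2_eq_square)

lemma max_0_le_shifted_square: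
  assumes K: "K > 0"
  shows "max 0 d \<le> (shifted_pos_power K 2 d + K^2) / (4*K)"
proof (cases "d \<ge> 0")
  case True
  have "(d + K)^2 - d * (4*K) = (d - K)^2" by (simp add: power2_eq_square algebra_simps)
  then have "d * (4*K) \<le> (d + K)^2 + K^2" using zero_le_power2[of "d - K"] zero_le_power2[of K] by linarith
  then show ?thesis using True K by (simp add: shifted_pos_power_def pos_le_divide_eq)
next
  case False
  then show ?thesis using K by (simp add: shifted_pos_power_def)
qed

lemma pos_part_power_moment_le:
  fixes \<mu> :: "'b measure" and D :: "'b \<Rightarrow> real" and U p :: real and l :: nat
  assumes U: "U > 0" and l: "l \<ge> 2" "real l \<le> p"
    and bound: "\<And>K q. K > 0 \<Longrightarrow> q \<ge> 2 \<Longrightarrow> real q \<le> p \<Longrightarrow>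
      (\<integral>\<^sup>+\<omega>. ennreal (shifted_pos_power K q (D \<omega>) + K^q) \<partial>\<mu>) \<le> ennreal (exp (growth_rate q (U/K)) * (2 * K^q))"
  shows "(\<integral>\<^sup>+\<omega>. ennreal ((max 0 (D \<omega>))^l) \<partial>\<mu>) \<le> ennreal ((sqrt 35 * l * U)^l)"
proof -
  define K where "K = 2 * l * U"
  have K: "K > 0" using U l by (simp add: K_def)
  have "U / K = 1 / (2 * real l)" unfolding K_def using U by simp
  then have "exp (growth_rate l (U/K)) \<le> exp 1" using growth_rate_le_1[OF l(1)] by simp
  then have "exp (growth_rate l (U/K)) \<le> 3" using exp_le by linarith
  then have "exp (growth_rate l (U/K)) * (2 * K^l) \<le> 3 * (2 * K^l)"
    using K by (intro mult_right_mono) auto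
  also have "\<dots> = 6 * 2^l * (l * U)^l" by (simp add: K_def power_mult_distrib)
  also have "\<dots> \<le> sqrt 35 ^ l * (l * U)^l"
  proof (rule mult_right_mono)
    have "6 * (2::real)^l = 24 * 2^(l-2)" using l by (simp add: power_eq_if numeral_eq_Suc)
    also have "\<dots> \<le> 35 * sqrt 35^(l-2)" by (intro mult_mono power_mono) (auto intro: real_le_rsqrt)
    also have "\<dots> = sqrt 35 ^ l" using l by (simp flip: power_add add: power_eq_if numeral_eq_Suc)
    finally show "6 * 2^l \<le> sqrt (35::real)^l" .
  qed (use U in simp)
  finally have le: "exp (growth_rate l (U/K)) * (2 * K^l) \<le> (sqrt 35 * l * U)^l"
    by (simp add: power_mult_distrib)
  have "(\<integral>\<^sup>+\<omega>. ennreal ((max 0 (D \<omega>))^l) \<partial>\<mu>) \<le> (\<integral>\<^sup>+\<omega>. ennreal (shifted_pos_power K l (D \<omega>) + K^l) \<partial>\<mu>)"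
    using K by (intro nn_integral_mono ennreal_leI) (simp add: shifted_pos_power_def add_increasing2 power_mono)
  also have "\<dots> \<le> ennreal (exp (growth_rate l (U/K)) * (2 * K^l))" by (rule bound[OF K l])
  also have "\<dots> \<le> ennreal ((sqrt 35 * l * U)^l)" using le by (rule ennreal_leI)
  finally show ?thesis .
qed

lemma pos_part_moment_le:
  fixes \<mu> :: "'b measure" and D :: "'b \<Rightarrow> real" and U p :: real
  assumes U: "U > 0" and p: "p \<ge> 2" and D: "D \<in> borel_measurable \<mu>"
    and bound: "\<And>K q. K > 0 \<Longrightarrow> q \<ge> 2 \<Longrightarrow> real q \<le> p \<Longrightarrow>
      (\<integral>\<^sup>+\<omega>. ennreal (shifted_pos_power K q (D \<omega>) + K^q) \<partial>\<mu>) \<le> ennreal (exp (growth_rate q (U/K)) * (2 * K^q))"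
  shows "(\<integral>\<^sup>+\<omega>. ennreal (max 0 (D \<omega>)) \<partial>\<mu>) \<le> ennreal (sqrt 35 * U)"
proof -
  define K where "K = 6 * U"
  have K: "K > 0" using U by (simp add: K_def)
  have "exp (1/4 :: real) \<le> 1.9"
  proof (rule power_le_imp_le_base[where n=3])
    have "exp (1/4 :: real) ^ Suc 3 = exp 1" by (simp flip: exp_of_nat_mult)
    also have "\<dots> \<le> 1.9 ^ Suc 3" using exp_le by (simp add: power_numeral_reduce)
    finally show "exp (1/4 :: real) ^ Suc 3 \<le> 1.9 ^ Suc 3" .
  qed simp
  moreover have "exp (growth_rate 2 (U/K)) \<le> exp (1/4)" using growth_rate_2_le U by (simp add: K_def)
  ultimately have "exp (growth_rate 2 (U/K)) \<le> 1.9" by linarith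
  then have "exp (growth_rate 2 (U/K)) * (2 * K^2) / (4*K) \<le> 1.9 * 3 * U"
    using K U by (simp add: K_def power2_eq_square field_simps)
  also have "\<dots> \<le> sqrt 35 * U" using U by (intro mult_right_mono real_le_rsqrt) (auto simp: power2_eq_square)
  finally have le: "exp (growth_rate 2 (U/K)) * (2 * K^2) / (4*K) \<le> sqrt 35 * U" .
  have "(\<integral>\<^sup>+\<omega>. ennreal (max 0 (D \<omega>)) \<partial>\<mu>)
      \<le> (\<integral>\<^sup>+\<omega>. ennreal (shifted_pos_power K 2 (D \<omega>) + K^2) * ennreal (1 / (4*K)) \<partial>\<mu>)"
  proof (rule nn_integral_mono)
    fix \<omega>
    have "max 0 (D \<omega>) \<le> (shifted_pos_power K 2 (D \<omega>) + K^2) * (1 / (4*K))"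
      using max_0_le_shifted_square[OF K] by simp
    then have "ennreal (max 0 (D \<omega>)) \<le> ennreal ((shifted_pos_power K 2 (D \<omega>) + K^2) * (1 / (4*K)))"
      by (rule ennreal_leI)
    also have "\<dots> = ennreal (shifted_pos_power K 2 (D \<omega>) + K^2) * ennreal (1 / (4*K))"
      using K by (intro ennreal_mult) (auto simp: shifted_pos_power_def)
    finally show "ennreal (max 0 (D \<omega>)) \<le> ennreal (shifted_pos_power K 2 (D \<omega>) + K^2) * ennreal (1 / (4*K))" .
  qed
  also have "\<dots> = (\<integral>\<^sup>+\<omega>. ennreal (shifted_pos_power K 2 (D \<omega>) + K^2) \<partial>\<mu>) * ennreal (1 / (4*K))"
    using D by (intro nn_integral_multc) (simp add: shifted_pos_power_def)
  also have "\<dots> \<le> ennreal (exp (growth_rate 2 (U/K)) * (2 * K^2)) * ennreal (1 / (4*K))"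
    using bound[OF K, of 2] p by (intro mult_right_mono) auto
  also have "\<dots> \<le> ennreal (sqrt 35 * U)"
    using le K by (simp add: ennreal_mult'[symmetric] ennreal_leI)
  finally show ?thesis .
qed

lemma powr_half_scaled_eq_power:
  fixes l n :: nat and M :: real
  assumes l: "l \<ge> 1" and n: "n \<ge> 1"
  shows "(35 * (real l)^2 / real n) powr (real l / 2) * M^l = (sqrt 35 * l * (M / sqrt n))^l"
proof -
  have "(35 * (real l)^2 / real n) powr (real l / 2) = ((35 * (real l)^2 / real n) powr (1/2)) powr real l"
    by (simp add: powr_powr)
  also have "\<dots> = sqrt (35 * (real l)^2 / real n) ^ l"
    using l n by (simp add: powr_half_sqrt powr_realpow)
  finally show ?thesis by (simp add: real_sqrt_mult real_sqrt_divide power_mult_distrib power_divide)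
qed

theorem theorem4p2:
  fixes Sp :: "nat \<Rightarrow> 'a measure"
    and Z :: "nat \<Rightarrow> nat \<Rightarrow> 'a \<Rightarrow> real"
    and E :: "nat \<Rightarrow> 'a \<Rightarrow> real"
    and n N l :: nat and p M :: real
  assumes n: "n \<ge> 1" and N: "N \<ge> 1"
    and prob: "\<And>i. i \<in> {1..n} \<Longrightarrow> prob_space (Sp i)"
    and Zmeas: "\<And>i j. i \<in> {1..n} \<Longrightarrow> j \<in> {1..N} \<Longrightarrow> Z i j \<in> borel_measurable (Sp i)"
    and Emeas: "\<And>i. i \<in> {1..n} \<Longrightarrow> E i \<in> borel_measurable (Sp i)"
    and env: "\<And>i j x. i \<in> {1..n} \<Longrightarrow> j \<in> {1..N} \<Longrightarrow> x \<in> space (Sp i) \<Longrightarrow> \<bar>Z i j x\<bar> \<le> E i x"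
    and M: "M > 0"
    and mom: "\<And>i. i \<in> {1..n} \<Longrightarrow> (\<integral>\<^sup>+ x. ennreal (E i x powr p) \<partial>Sp i) \<le> ennreal (M powr p)"
    and centered: "\<And>i j. i \<in> {1..n} \<Longrightarrow> j \<in> {1..N} \<Longrightarrow> (\<integral>x. Z i j x \<partial>Sp i) = 0"
    and p: "p \<ge> 2" and l: "l \<ge> 1" and lp: "real l \<le> p"
  shows "(\<integral>\<^sup>+ \<omega>. ennreal ((max 0 (maxZ n N Z \<omega> - 2 * M * ln (2 * real N) / sqrt (real n))) ^ l)
            \<partial>(\<Pi>\<^sub>M i\<in>{1..n}. Sp i))
         \<le> ennreal ((35 * (real l)^2 / real n) powr (real l / 2) * M ^ l)"
proof -
  define U where "U = M / sqrt n"
  define D where "D \<omega> = smax N (1 / (2*U)) (\<lambda>j. \<Sum>i=1..n. Z i j (\<omega> i) / n) - smax N (1 / (2*U)) (\<lambda>_. 0)"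
    for \<omega>
  have U: "U > 0" using M n by (simp add: U_def)
  have bound: "(\<integral>\<^sup>+\<omega>. ennreal (shifted_pos_power K q (D \<omega>) + K^q) \<partial>(\<Pi>\<^sub>M i\<in>{1..n}. Sp i))
      \<le> ennreal (exp (growth_rate q (U/K)) * (2 * K^q))" if "K > 0" "q \<ge> 2" "real q \<le> p" for K q
    using smax_sum_expectation_le_exp[OF n N prob Zmeas Emeas env M mom centered that]
    by (simp add: D_def U_def)
  have "2 * M * ln (2 * real N) / sqrt n = smax N (1 / (2*U)) (\<lambda>_. 0)" by (simp add: smax_zero U_def)
  then have "maxZ n N Z \<omega> - 2 * M * ln (2 * real N) / sqrt n \<le> D \<omega>" for \<omega>
    using maxZ_le_smax[where lam="1 / (2*U)" and n=n and Z=Z, OF N] U by (simp add: D_def)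
  then have "(\<integral>\<^sup>+\<omega>. ennreal ((max 0 (maxZ n N Z \<omega> - 2 * M * ln (2 * real N) / sqrt n))^l) \<partial>(\<Pi>\<^sub>M i\<in>{1..n}. Sp i))
      \<le> (\<integral>\<^sup>+\<omega>. ennreal ((max 0 (D \<omega>))^l) \<partial>(\<Pi>\<^sub>M i\<in>{1..n}. Sp i))"
    by (intro nn_integral_mono ennreal_leI power_mono max.mono) auto
  also have "\<dots> \<le> ennreal ((sqrt 35 * l * U)^l)"
  proof (cases "l \<ge> 2")
    case True
    then show ?thesis by (rule pos_part_power_moment_le[OF U _ lp bound])
  next
    case False
    with l have "l = 1" by simp
    moreover have "D \<in> borel_measurable (\<Pi>\<^sub>M i\<in>{1..n}. Sp i)"
      unfolding D_def by (intro borel_measurable_diff borel_measurable_const borel_measurable_smax_sum Zmeas)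
    ultimately show ?thesis using pos_part_moment_le[OF U p _ bound] by simp
  qed
  finally show ?thesis by (simp add: powr_half_scaled_eq_power[OF l n] U_def)
qed

end
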